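(* Let $M,N\in\mathbb{R}^{(k+n)\times(k+n)}$ be symmetric, partitioned as $M=\begin{bmatrix} M_{11} & M_{12}\\ M_{12}^\top & M_{22}\end{bmatrix}$, $N=\begin{bmatrix} N_{11} & N_{12}\\ N_{12}^\top & N_{22}\end{bmatrix}$ with $M_{11},N_{11}\in\mathbb{R}^{k\times k}$ and $M_{22},N_{22}\in\mathbb{R}^{n\times n}$. Assume $M_{22}\le 0$, $N_{22}\le 0$ and $\ker N_{22}\subseteq\ker N_{12}$, and that there exists $\bar Z\in\mathbb{R}^{n\times k}$ with $\begin{bmatrix} I\\ \bar Z\end{bmatrix}^\top N\begin{bmatrix} I\\ \bar Z\end{bmatrix}>0$. Let $\mathcal{S}_N:=\{Z\in\mathbb{R}^{n\times k}\mid \begin{bmatrix} I\\ Z\end{bmatrix}^\top N\begin{bmatrix} I\\ Z\end{bmatrix}\ge 0\}$. Then $\begin{bmatrix} I\\ Z\end{bmatrix}^\top M\begin{bmatrix} I\\ Z\end{bmatrix}>0$ for all $Z\in\mathcal{S}_N$ if and only if there exist $\alpha\ge 0$ and $\beta>0$ such that $$M-\alpha N\ge\begin{bmatrix}\beta I & 0\\ 0 & 0\end{bmatrix}.$$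
   Context: $I$ denotes the $k\times k$ identity. For symmetric matrices, $\ge 0$ means positive semidefinite, $>0$ positive definite, and $A\ge B$ means $A-B\ge0$. *)

theory Defs
  imports "HOL-Analysis.Analysis"
begin

definition psd :: "real^'n^'n \<Rightarrow> bool" where
  "psd A \<longleftrightarrow> (\<forall>x. 0 \<le> x \<bullet> (A *v x))"

definition pd :: "real^'n^'n \<Rightarrow> bool" where
  "pd A \<longleftrightarrow> (\<forall>x. x \<noteq> 0 \<longrightarrow> 0 < x \<bullet> (A *v x))"

definition blk11 :: "real^('k::finite+'n::finite)^('k+'n) \<Rightarrow> real^'k^'k" where
  "blk11 M = (\<chi> i j. M $ Inl i $ Inl j)"
definition blk12 :: "real^('k::finite+'n::finite)^('k+'n) \<Rightarrow> real^'n^'k" where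
  "blk12 M = (\<chi> i j. M $ Inl i $ Inr j)"
definition blk22 :: "real^('k::finite+'n::finite)^('k+'n) \<Rightarrow> real^'n^'n" where
  "blk22 M = (\<chi> i j. M $ Inr i $ Inr j)"

definition stackIZ :: "real^'k::finite^'n::finite \<Rightarrow> real^'k^('k+'n)" where
  "stackIZ Z = (\<chi> r j. case r of Inl i \<Rightarrow> (if i = j then 1 else 0) | Inr i \<Rightarrow> Z $ i $ j)"

definition diagBeta :: "real \<Rightarrow> real^('k::finite+'n::finite)^('k+'n)" where
  "diagBeta \<beta> = (\<chi> r s. case (r, s) of (Inl i, Inl j) \<Rightarrow> (if i = j then \<beta> else 0) | _ \<Rightarrow> 0)"

definition qf :: "real^('k::finite+'n::finite)^('k+'n) \<Rightarrow> real^'k^'n \<Rightarrow> real^'k^'k" where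
  "qf M Z = transpose (stackIZ Z) ** M ** stackIZ Z"

end

theory Submission
  imports Defs
begin

text \<open>For necessity, choose \<open>Z0\<close> with \<open>N22 Z0 = -N21\<close>, which is
  solvable because \<open>ker N22 \<subseteq> ker N12\<close>. The graph of \<open>Z0\<close> is \<open>N\<close>-orthogonal to the vertical
  directions \<open>0 \<times> \<real>\<^sup>n\<close>, and by the Slater point \<open>N\<close> is positive definite on it. Hence every
  \<open>(x, y)\<close> with \<open>x \<noteq> 0\<close> in the cone \<open>w\<^sup>T N w \<ge> 0\<close> lies on the graph of some \<open>Z \<in> S\<^sub>N\<close>
  (a rank-one correction of \<open>Z0\<close>), so \<open>M\<close> is positive there; moreover \<open>M\<close> vanishes on
  \<open>0 \<times> ker N22\<close>. Compactness of the cone modulo these null directions gives \<open>\<beta> > 0\<close> with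
  \<open>w\<^sup>T M w \<ge> \<beta> |x|\<^sup>2\<close> on the cone, and the homogeneous S-lemma, applied to
  \<open>M - diag(\<beta> I, 0)\<close> and \<open>N\<close>, supplies \<open>\<alpha> \<ge> 0\<close>.\<close>

section \<open>Quadratic forms and the homogeneous S-lemma\<close>

abbreviation qform :: "real^'m^'m \<Rightarrow> real^'m \<Rightarrow> real" where
  "qform A x \<equiv> x \<bullet> (A *v x)"

lemma quadratic_nonneg_imp_discriminant:
  fixes a b c :: real
  assumes nonneg: "\<forall>t. 0 \<le> a + 2*t*b + t^2*c"
  shows "b^2 \<le> a*c" and "0 \<le> c"
proof -
  have "b^2 \<le> a*c \<and> 0 \<le> c"
  proof (cases "0 < c")
    case True
    have "0 \<le> a + 2*(-b/c)*b + (-b/c)^2*c" using nonneg by blast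
    also have "\<dots> = (a*c - b^2) / c" using True by (simp add: power2_eq_square field_simps)
    finally show ?thesis using True by (simp add: zero_le_divide_iff)
  next
    case False
    have "b = 0"
    proof (rule ccontr)
      assume "b \<noteq> 0"
      define t where "t = - (\<bar>a\<bar> + 1) / (2*b)"
      have "0 \<le> a + 2*t*b + t^2*c" using nonneg by blast
      moreover have "t^2*c \<le> 0" using False by (simp add: mult_nonneg_nonpos)
      moreover have "2*t*b = - (\<bar>a\<bar> + 1)" using \<open>b \<noteq> 0\<close> by (simp add: t_def)
      ultimately show False by linarith
    qed
    moreover have "c = 0"
    proof (rule ccontr)
      assume "c \<noteq> 0"
      define t where "t = sqrt ((\<bar>a\<bar> + 1) / (-c))"
      have "0 \<le> (\<bar>a\<bar> + 1) / (-c)" using False \<open>c \<noteq> 0\<close> by (intro divide_nonneg_pos) auto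
      then have "t^2 = (\<bar>a\<bar> + 1) / (-c)" by (simp add: t_def)
      then have "t^2*c = - (\<bar>a\<bar> + 1)" using \<open>c \<noteq> 0\<close> by simp
      moreover have "0 \<le> a + 2*t*b + t^2*c" using nonneg by blast
      ultimately show False using \<open>b = 0\<close> by auto
    qed
    ultimately show ?thesis by simp
  qed
  then show "b^2 \<le> a*c" and "0 \<le> c" by auto
qed

lemma quadratic_roots_opposite_signs:
  fixes p b a :: real
  assumes "0 < p" and "a < 0"
  obtains r1 r2 where "r1 < 0" "0 < r2" "p + 2*r1*b + r1^2*a = 0" "p + 2*r2*b + r2^2*a = 0"
proof -
  define D where "D = b^2 - a*p"
  have "b^2 < D" using assms by (simp add: D_def mult_neg_pos)
  then have "0 < D" using zero_le_power2[of b] by linarith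
  then have D: "\<bar>b\<bar> < sqrt D" "sqrt D ^ 2 = D"
    using \<open>b^2 < D\<close> real_less_rsqrt[of "\<bar>b\<bar>" D] by auto
  have root: "p + 2*r*b + r^2*a = 0" if "a*r + b = sqrt D \<or> a*r + b = - sqrt D" for r
  proof -
    have "a*(p + 2*r*b + r^2*a) = (a*r + b)^2 - D"
      unfolding D_def by (simp add: power2_eq_square algebra_simps)
    then show ?thesis using that D(2) \<open>a < 0\<close> by auto
  qed
  show ?thesis
  proof (rule that[of "(sqrt D - b) / a" "(- sqrt D - b) / a"])
    show "(sqrt D - b) / a < 0" "0 < (- sqrt D - b) / a"
      using D(1) \<open>a < 0\<close> by (auto simp: divide_neg_neg divide_pos_neg)
    show "p + 2*((sqrt D - b) / a)*b + ((sqrt D - b) / a)^2*a = 0"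
      by (rule root) (use \<open>a < 0\<close> in simp)
    show "p + 2*((- sqrt D - b) / a)*b + ((- sqrt D - b) / a)^2*a = 0"
      by (rule root) (use \<open>a < 0\<close> in simp)
  qed
qed

lemma symmetric_inner_mv:
  fixes A :: "real^'m^'m"
  assumes "transpose A = A"
  shows "x \<bullet> (A *v y) = y \<bullet> (A *v x)"
  by (metis assms dot_lmul_matrix inner_commute transpose_matrix_vector)

lemma qform_add_scaleR:
  fixes A :: "real^'m^'m"
  assumes "transpose A = A"
  shows "qform A (u + t *\<^sub>R v) = qform A u + 2*t*(u \<bullet> (A *v v)) + t^2 * qform A v"
  using symmetric_inner_mv[OF assms, of v u]
  by (simp add: matrix_vector_right_distrib matrix_vector_mult_scaleR inner_add_left
      inner_add_right power2_eq_square algebra_simps)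

lemma qform_scaleR: "qform A (s *\<^sub>R x) = s^2 * qform A x"
  by (simp add: matrix_vector_mult_scaleR power2_eq_square)

lemma qform_add_kernel:
  fixes A :: "real^'m^'m"
  assumes "transpose A = A" and "A *v z = 0"
  shows "qform A (x + z) = qform A x"
  using qform_add_scaleR[OF assms(1), of x 1 z] assms(2) by simp

lemma psd_qform_eq_0_imp_kernel:
  fixes A :: "real^'m^'m"
  assumes "transpose A = A" and "psd A" and "qform A x = 0"
  shows "A *v x = 0"
proof -
  have "(x \<bullet> (A *v y))^2 \<le> 0" for y
  proof -
    have "\<forall>t. 0 \<le> qform A x + 2*t*(x \<bullet> (A *v y)) + t^2 * qform A y"
      using \<open>psd A\<close> qform_add_scaleR[OF assms(1), of x _ y] unfolding psd_def by metis
    then show ?thesis using quadratic_nonneg_imp_discriminant(1) assms(3) by fastforce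
  qed
  then have "(A *v x) \<bullet> (A *v x) = 0"
    using symmetric_inner_mv[OF assms(1), of x "A *v x"] by (simp add: inner_commute)
  then show ?thesis by simp
qed

lemma S_lemma_ratio_le:
  fixes A B :: "real^'m^'m"
  assumes sA: "transpose A = A" and sB: "transpose B = B"
    and implies: "\<forall>w. 0 \<le> qform B w \<longrightarrow> 0 \<le> qform A w"
    and u: "0 < qform B u" and v: "qform B v < 0"
  shows "qform A v / qform B v \<le> qform A u / qform B u"
proof -
  define l where "l = qform A v / qform B v"
  obtain r1 r2 where r: "r1 < 0" "0 < r2"
    and roots: "qform B (u + r1 *\<^sub>R v) = 0" "qform B (u + r2 *\<^sub>R v) = 0"
    using quadratic_roots_opposite_signs[OF u v, of "u \<bullet> (B *v v)"]
    unfolding qform_add_scaleR[OF sB] by blast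
  \<comment> \<open>On the zero set of \<open>B\<close> along the line \<open>u + r v\<close>, the form \<open>A - l B\<close> is affine in \<open>r\<close>.\<close>
  have affine: "0 \<le> (qform A u - l * qform B u) + r * (2 * (u \<bullet> (A *v v) - l * (u \<bullet> (B *v v))))"
    if "qform B (u + r *\<^sub>R v) = 0" for r
  proof -
    have "0 \<le> qform A (u + r *\<^sub>R v) - l * qform B (u + r *\<^sub>R v)"
      using implies that by simp
    also have "\<dots> = (qform A u - l * qform B u) + r * (2 * (u \<bullet> (A *v v) - l * (u \<bullet> (B *v v))))"
      using v unfolding qform_add_scaleR[OF sA] qform_add_scaleR[OF sB] l_def
      by (simp add: field_simps)
    finally show ?thesis .
  qed
  have "0 \<le> qform A u - l * qform B u"
  proof -
    have "0 \<le> a" if "0 \<le> a + r1 * b" and "0 \<le> a + r2 * b" for a b :: real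
    proof (cases "0 \<le> b")
      case True
      then have "r1 * b \<le> 0" using r(1) by (simp add: mult_nonpos_nonneg)
      then show ?thesis using that(1) by linarith
    next
      case False
      then have "r2 * b \<le> 0" using r(2) by (simp add: mult_nonneg_nonpos)
      then show ?thesis using that(2) by linarith
    qed
    then show ?thesis using affine[OF roots(1)] affine[OF roots(2)] .
  qed
  then show ?thesis using u by (simp add: l_def field_simps)
qed

lemma S_lemma:
  fixes A B :: "real^'m^'m"
  assumes sA: "transpose A = A" and sB: "transpose B = B"
    and implies: "\<forall>w. 0 \<le> qform B w \<longrightarrow> 0 \<le> qform A w"
    and regular: "0 < qform B w0"
  shows "\<exists>\<alpha>\<ge>0. \<forall>w. \<alpha> * qform B w \<le> qform A w"
proof -
  define R where "R = {qform A w / qform B w | w. 0 < qform B w}"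
  have R_nonneg: "0 \<le> x" if "x \<in> R" for x
    using that implies unfolding R_def by fastforce
  have "R \<noteq> {}" using regular by (auto simp: R_def)
  define \<alpha> where "\<alpha> = Inf R"
  have "\<alpha> * qform B w \<le> qform A w" for w
  proof (cases "0 < qform B w")
    case True
    then have "\<alpha> \<le> qform A w / qform B w"
      unfolding \<alpha>_def using R_nonneg by (intro cInf_lower bdd_belowI) (auto simp: R_def)
    then show ?thesis using True by (simp add: field_simps)
  next
    case False
    show ?thesis
    proof (cases "qform B w = 0")
      case True
      then show ?thesis using implies by simp
    next
      case False
      then have neg: "qform B w < 0" using \<open>\<not> 0 < qform B w\<close> by simp
      have "qform A w / qform B w \<le> \<alpha>"
        unfolding \<alpha>_def using \<open>R \<noteq> {}\<close>
        by (rule cInf_greatest) (auto simp: R_def intro: S_lemma_ratio_le[OF sA sB implies _ neg])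
      then show ?thesis using neg by (simp add: field_simps)
    qed
  qed
  moreover have "0 \<le> \<alpha>"
    unfolding \<alpha>_def using \<open>R \<noteq> {}\<close> R_nonneg by (rule cInf_greatest)
  ultimately show ?thesis by blast
qed

lemma qform_coercive_on_cone:
  fixes A :: "real^'m^'m"
  assumes "closed C"
    and cone: "\<And>w s. w \<in> C \<Longrightarrow> 0 < s \<Longrightarrow> s *\<^sub>R w \<in> C"
    and pos: "\<And>w. w \<in> C \<Longrightarrow> w \<noteq> 0 \<Longrightarrow> 0 < qform A w"
  obtains \<beta> where "0 < \<beta>" and "\<And>w. w \<in> C \<Longrightarrow> \<beta> * (norm w)^2 \<le> qform A w"
proof -
  define S where "S = C \<inter> sphere 0 1"
  obtain \<beta> where "0 < \<beta>" and \<beta>: "\<And>e. e \<in> S \<Longrightarrow> \<beta> \<le> qform A e"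
  proof (cases "S = {}")
    case False
    have "compact S" unfolding S_def using \<open>closed C\<close> by (simp add: closed_Int_compact)
    moreover have "continuous_on S (qform A)" by (intro continuous_intros)
    ultimately obtain e0 where "e0 \<in> S" "\<And>e. e \<in> S \<Longrightarrow> qform A e0 \<le> qform A e"
      using continuous_attains_inf[OF _ False] by metis
    moreover have "0 < qform A e0"
      using \<open>e0 \<in> S\<close> by (intro pos) (auto simp: S_def)
    ultimately show ?thesis using that by blast
  qed (use that[of 1] in auto)
  have "\<beta> * (norm w)^2 \<le> qform A w" if "w \<in> C" for w
  proof (cases "w = 0")
    case False
    define e where "e = (1 / norm w) *\<^sub>R w"
    have "e \<in> S" using False cone[OF \<open>w \<in> C\<close>] by (simp add: S_def e_def)
    have "w = norm w *\<^sub>R e" using False by (simp add: e_def)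
    then have "qform A w = (norm w)^2 * qform A e" by (metis qform_scaleR)
    then show ?thesis using \<beta>[OF \<open>e \<in> S\<close>] by (simp add: mult.commute mult_right_mono)
  qed simp
  then show ?thesis using that \<open>0 < \<beta>\<close> by blast
qed

lemma symmetric_solvable_if_orthogonal_kernel:
  fixes P :: "real^'m^'m"
  assumes "transpose P = P" and orth: "\<forall>v. P *v v = 0 \<longrightarrow> r \<bullet> v = 0"
  shows "\<exists>z. P *v z = r"
proof -
  have ker: "(*v) P -` {0} = (range ((*v) P))\<^sup>\<bottom>"
    using ker_orthogonal_comp_adjoint[of "(*v) P"] assms(1) by (simp add: adjoint_matrix)
  have "r \<in> ((*v) P -` {0})\<^sup>\<bottom>"
    using orth by (auto simp: orthogonal_comp_def orthogonal_def inner_commute)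
  also have "\<dots> = range ((*v) P)"
    unfolding ker by (rule orthogonal_comp_self) (simp add: subspace_UNIV linear_subspace_image)
  finally show ?thesis by auto
qed

lemma matrix_equation_solvable_columnwise:
  fixes P :: "real^'m^'l" and Q :: "real^'k^'l"
  assumes "\<forall>x. \<exists>z. P *v z = Q *v x"
  shows "\<exists>Z. P ** Z = Q"
proof -
  have "\<forall>j. \<exists>z. P *v z = Q *v axis j 1" using assms by blast
  from choice[OF this] obtain z where z: "\<forall>j. P *v z j = Q *v axis j 1" by blast
  have "P ** (\<chi> i j. z j $ i) = Q"
    using z by (simp add: vec_eq_iff matrix_matrix_mult_def matrix_vector_mult_def axis_def
        if_distrib[of "\<lambda>x. _ * x"] cong: if_cong)
  then show ?thesis ..
qed

section \<open>Block vectors and block matrices\<close>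

definition vjoin :: "real^'k::finite \<Rightarrow> real^'n::finite \<Rightarrow> real^('k + 'n)" where
  "vjoin x y = (\<chi> r. case r of Inl i \<Rightarrow> x $ i | Inr i \<Rightarrow> y $ i)"

definition vtop :: "real^('k::finite + 'n::finite) \<Rightarrow> real^'k" where
  "vtop w = (\<chi> i. w $ Inl i)"

definition vbot :: "real^('k::finite + 'n::finite) \<Rightarrow> real^'n" where
  "vbot w = (\<chi> i. w $ Inr i)"

definition blk21 :: "real^('k::finite + 'n::finite)^('k + 'n) \<Rightarrow> real^'k^'n" where
  "blk21 M = (\<chi> i j. M $ Inr i $ Inl j)"

lemma vtop_vjoin [simp]: "vtop (vjoin x y) = x"
  by (simp add: vec_eq_iff vjoin_def vtop_def)

lemma vbot_vjoin [simp]: "vbot (vjoin x y) = y"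
  by (simp add: vec_eq_iff vjoin_def vbot_def)

lemma vjoin_vtop_vbot [simp]: "vjoin (vtop w) (vbot w) = w"
  by (simp add: vec_eq_iff vjoin_def vtop_def vbot_def split: sum.splits)

lemma vjoin_add: "vjoin (x + x') (y + y') = vjoin x y + vjoin x' y'"
  by (simp add: vec_eq_iff vjoin_def split: sum.splits)

lemma vjoin_scaleR: "vjoin (t *\<^sub>R x) (t *\<^sub>R y) = t *\<^sub>R vjoin x y"
  by (simp add: vec_eq_iff vjoin_def split: sum.splits)

lemma vjoin_0_scaleR: "vjoin 0 (t *\<^sub>R y) = t *\<^sub>R vjoin 0 y"
  using vjoin_scaleR[of t 0 y] by simp

lemma vjoin_0 [simp]: "vjoin 0 0 = 0"
  by (simp add: vec_eq_iff vjoin_def split: sum.splits)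

lemma vtop_linear [simp]:
  "vtop (a + b) = vtop a + vtop b" "vtop (t *\<^sub>R a) = t *\<^sub>R vtop a" "vtop 0 = 0"
  by (simp_all add: vec_eq_iff vtop_def)

lemma vbot_linear [simp]:
  "vbot (a + b) = vbot a + vbot b" "vbot (t *\<^sub>R a) = t *\<^sub>R vbot a" "vbot 0 = 0"
  by (simp_all add: vec_eq_iff vbot_def)

lemma inner_blocks: "a \<bullet> b = vtop a \<bullet> vtop b + vbot a \<bullet> vbot b"
  by (simp add: inner_vec_def vtop_def vbot_def UNIV_Plus_UNIV[symmetric] sum.Plus
      del: UNIV_Plus_UNIV)

lemma vtop_mv_vjoin: "vtop (M *v vjoin x y) = blk11 M *v x + blk12 M *v y"
  by (simp add: vec_eq_iff vtop_def vjoin_def blk11_def blk12_def matrix_vector_mult_def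
      UNIV_Plus_UNIV[symmetric] sum.Plus del: UNIV_Plus_UNIV)

lemma vbot_mv_vjoin: "vbot (M *v vjoin x y) = blk21 M *v x + blk22 M *v y"
  by (simp add: vec_eq_iff vbot_def vjoin_def blk21_def blk22_def matrix_vector_mult_def
      UNIV_Plus_UNIV[symmetric] sum.Plus del: UNIV_Plus_UNIV)

lemma inner_vjoin_0: "vjoin 0 y \<bullet> w = y \<bullet> vbot w"
  by (simp add: inner_blocks[of "vjoin 0 y"])

lemma qform_vjoin_0: "qform M (vjoin 0 y) = qform (blk22 M) y"
  by (simp add: inner_vjoin_0 vbot_mv_vjoin)

lemma symmetric_matrix_entry:
  assumes "transpose M = M"
  shows "M $ i $ j = M $ j $ i"
proof -
  have "transpose M $ j $ i = M $ j $ i" using assms by simp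
  then show ?thesis by (simp add: transpose_def)
qed

lemma transpose_blk22:
  assumes "transpose M = M"
  shows "transpose (blk22 M) = blk22 M"
  using symmetric_matrix_entry[OF assms] by (simp add: vec_eq_iff transpose_def blk22_def)

lemma transpose_blk12:
  assumes "transpose M = M"
  shows "transpose (blk12 M) = blk21 M"
  using symmetric_matrix_entry[OF assms] by (simp add: vec_eq_iff transpose_def blk12_def blk21_def)

lemma transpose_diff: "transpose (A - B) = transpose A - transpose B"
  by (simp add: vec_eq_iff transpose_def)

lemma transpose_diagBeta: "transpose (diagBeta b) = diagBeta b"
  by (auto simp: vec_eq_iff transpose_def diagBeta_def split: sum.split)

lemma stackIZ_mv: "stackIZ Z *v u = vjoin u (Z *v u)"
  by (simp add: vec_eq_iff stackIZ_def vjoin_def matrix_vector_mult_def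
      if_distrib[of "\<lambda>x. x * _"] cong: if_cong split: sum.splits)

lemma qf_qform: "qform (qf M Z) u = qform M (vjoin u (Z *v u))"
proof -
  have "qf M Z *v u = transpose (stackIZ Z) *v (M *v (stackIZ Z *v u))"
    by (simp add: qf_def matrix_vector_mul_assoc matrix_mul_assoc)
  then have "qf M Z *v u = (M *v (stackIZ Z *v u)) v* stackIZ Z"
    by simp
  then have "qform (qf M Z) u = (M *v (stackIZ Z *v u)) \<bullet> (stackIZ Z *v u)"
    by (metis inner_commute dot_lmul_matrix)
  then show ?thesis by (simp add: stackIZ_mv inner_commute)
qed

lemma qform_diagBeta: "qform (diagBeta b) w = b * (vtop w \<bullet> vtop w)"
proof -
  have "diagBeta b *v w = b *\<^sub>R vjoin (vtop w) 0"
    by (simp add: vec_eq_iff diagBeta_def vtop_def vjoin_def matrix_vector_mult_def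
        if_distrib[of "\<lambda>x. x * _"] UNIV_Plus_UNIV[symmetric] sum.Plus
        del: UNIV_Plus_UNIV cong: if_cong split: sum.splits)
  then show ?thesis by (simp add: inner_blocks[of w])
qed

lemma uminus_mv: "(- A) *v x = - (A *v (x :: real^_))"
  by (simp add: vec_eq_iff matrix_vector_mult_def flip: sum_negf)

lemma qform_vjoin_0_nonpos: "psd (- blk22 M) \<Longrightarrow> qform M (vjoin 0 y) \<le> 0"
  unfolding psd_def qform_vjoin_0 by (metis uminus_mv inner_minus_right neg_0_le_iff_le)

lemma blk22_kernel_of_qform_eq_0:
  assumes "transpose M = M" and "psd (- blk22 M)" and "qform M (vjoin 0 y) = 0"
  shows "blk22 M *v y = 0"
proof -
  have sym: "transpose (- blk22 M) = - blk22 M"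
    using transpose_scalar[of "-1" "blk22 M"] transpose_blk22[OF assms(1)] by simp
  have "qform (- blk22 M) y = 0"
    using assms(3) unfolding qform_vjoin_0 by (metis uminus_mv inner_minus_right neg_equal_0_iff_equal)
  then have "- blk22 M *v y = 0"
    by (rule psd_qform_eq_0_imp_kernel[OF sym assms(2)])
  then show ?thesis by (metis uminus_mv neg_equal_0_iff_equal)
qed

lemma outer_product_mv:
  "(\<chi> i j. d $ i * a $ j / k) *v u = ((a \<bullet> u) / k) *\<^sub>R (d :: real^'n)"
  by (simp add: vec_eq_iff matrix_vector_mult_def inner_vec_def sum_divide_distrib
      sum_distrib_left algebra_simps)

section \<open>The matrix S-lemma\<close>

locale matrix_S_lemma =
  fixes M N :: "real^('k::finite + 'n::finite)^('k + 'n)" and Zb :: "real^'k^'n"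
  assumes sym_M: "transpose M = M" and sym_N: "transpose N = N"
    and nsd_M22: "psd (- blk22 M)" and nsd_N22: "psd (- blk22 N)"
    and kernel_N22: "\<forall>v. blk22 N *v v = 0 \<longrightarrow> blk12 N *v v = 0"
    and slater: "pd (qf N Zb)"
begin

lemma N_mv_kernel_N22: "blk22 N *v v = 0 \<Longrightarrow> N *v vjoin 0 v = 0"
  using kernel_N22 vtop_mv_vjoin[of N 0 v] vbot_mv_vjoin[of N 0 v]
  by (metis add_0 matrix_vector_mult_0_right vjoin_0 vjoin_vtop_vbot)

lemma exists_Z0: "\<exists>Z0. blk22 N ** Z0 = - blk21 N"
proof (rule matrix_equation_solvable_columnwise, rule allI)
  fix x
  have "(- blk21 N *v x) \<bullet> v = 0" if "blk22 N *v v = 0" for v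
  proof -
    have "(blk21 N *v x) \<bullet> v = x \<bullet> (blk12 N *v v)"
      by (metis transpose_blk12[OF sym_N] transpose_matrix_vector dot_lmul_matrix)
    then show ?thesis using kernel_N22 that by (simp add: uminus_mv)
  qed
  then show "\<exists>z. blk22 N *v z = - blk21 N *v x"
    by (intro symmetric_solvable_if_orthogonal_kernel transpose_blk22[OF sym_N]) blast
qed

definition Z0 :: "real^'k^'n" where
  "Z0 = (SOME Z. blk22 N ** Z = - blk21 N)"

lemma blk22_Z0: "blk22 N ** Z0 = - blk21 N"
  unfolding Z0_def using exists_Z0 by (rule someI_ex)

abbreviation lift :: "real^'k \<Rightarrow> real^('k + 'n)" where
  "lift u \<equiv> vjoin u (Z0 *v u)"

lemma lift_add_scaleR: "lift (u + t *\<^sub>R x) = lift u + t *\<^sub>R lift x"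
  by (simp add: matrix_vector_right_distrib matrix_vector_mult_scaleR
      flip: vjoin_add vjoin_scaleR)

lemma vbot_N_lift: "vbot (N *v lift u) = 0"
proof -
  have "blk22 N *v (Z0 *v u) = - (blk21 N *v u)"
    by (simp add: matrix_vector_mul_assoc blk22_Z0 uminus_mv)
  then show ?thesis by (simp add: vbot_mv_vjoin)
qed

lemma qform_N_lift_add:
  "qform N (vjoin u (Z0 *v u + d)) = qform N (lift u) + qform N (vjoin 0 d)"
proof -
  have "vjoin u (Z0 *v u + d) = lift u + 1 *\<^sub>R vjoin 0 d"
    by (simp flip: vjoin_add)
  moreover have "lift u \<bullet> (N *v vjoin 0 d) = 0"
    using symmetric_inner_mv[OF sym_N] vbot_N_lift by (simp add: inner_vjoin_0)
  ultimately show ?thesis by (simp only: qform_add_scaleR[OF sym_N]) simp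
qed

lemma qform_N_lift_pos:
  assumes "u \<noteq> 0"
  shows "0 < qform N (lift u)"
proof -
  have "0 < qform (qf N Zb) u" using slater assms by (simp add: pd_def)
  also have "\<dots> = qform N (vjoin u (Z0 *v u + (Zb *v u - Z0 *v u)))"
    by (simp add: qf_qform)
  also have "\<dots> \<le> qform N (lift u)"
    unfolding qform_N_lift_add using qform_vjoin_0_nonpos[OF nsd_N22] by simp
  finally show ?thesis .
qed

lemma qform_N_lift_nonneg: "0 \<le> qform N (lift u)"
  using qform_N_lift_pos[of u] by (cases "u = 0") auto

lemma cross_N_lift_sq_le:
  "(lift u \<bullet> (N *v lift x))^2 \<le> qform N (lift u) * qform N (lift x)"
proof (rule quadratic_nonneg_imp_discriminant(1), rule allI)
  fix t
  show "0 \<le> qform N (lift u) + 2*t*(lift u \<bullet> (N *v lift x)) + t^2 * qform N (lift x)"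
    using qform_N_lift_nonneg[of "u + t *\<^sub>R x"]
    by (simp only: lift_add_scaleR qform_add_scaleR[OF sym_N])
qed

text \<open>The witness is the rank-one correction \<open>Z0 + d a\<^sup>T / c\<close>; Cauchy-Schwarz for \<open>N\<close> on the
  graph of \<open>Z0\<close> keeps it in \<open>S\<^sub>N\<close>.\<close>
lemma graph_through_point:
  assumes "x \<noteq> 0" and "0 \<le> qform N (vjoin x y)"
  obtains Z where "Z *v x = y" and "psd (qf N Z)"
proof -
  define d where "d = y - Z0 *v x"
  define c where "c = qform N (lift x)"
  define a where "a = transpose (stackIZ Z0) *v (N *v lift x)"
  have c: "0 < c" using qform_N_lift_pos[OF assms(1)] by (simp add: c_def)
  have a: "a \<bullet> u = lift u \<bullet> (N *v lift x)" for u
  proof -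
    have "a \<bullet> u = (N *v lift x) \<bullet> (stackIZ Z0 *v u)" by (simp add: a_def dot_lmul_matrix)
    then show ?thesis by (simp add: stackIZ_mv inner_commute)
  qed
  define Z where "Z = Z0 + (\<chi> i j. d $ i * a $ j / c)"
  have Z: "Z *v u = Z0 *v u + ((a \<bullet> u) / c) *\<^sub>R d" for u
    by (simp add: Z_def matrix_vector_mult_add_rdistrib outer_product_mv)
  have "0 \<le> c + qform N (vjoin 0 d)"
    using assms(2) qform_N_lift_add[of x d] by (simp add: c_def d_def)
  then have d: "- c \<le> qform N (vjoin 0 d)" by simp
  have "psd (qf N Z)"
    unfolding psd_def
  proof
    fix u
    define s where "s = (a \<bullet> u) / c"
    have scale: "qform N (vjoin 0 (s *\<^sub>R d)) = s^2 * qform N (vjoin 0 d)"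
      by (simp only: vjoin_0_scaleR qform_scaleR)
    have "qform (qf N Z) u = qform N (vjoin u (Z0 *v u + s *\<^sub>R d))"
      by (simp add: qf_qform Z s_def)
    also have "\<dots> = qform N (lift u) + s^2 * qform N (vjoin 0 d)"
      by (simp only: qform_N_lift_add scale)
    also have "\<dots> \<ge> qform N (lift u) - s^2 * c"
      using mult_left_mono[OF d, of "s^2"] by simp
    also have "s^2 * c = (a \<bullet> u)^2 / c"
      using c by (simp add: s_def power2_eq_square)
    finally have "qform N (lift u) - (a \<bullet> u)^2 / c \<le> qform (qf N Z) u" .
    moreover have "(a \<bullet> u)^2 / c \<le> qform N (lift u)"
      using cross_N_lift_sq_le[of u x] c by (simp add: a c_def pos_divide_le_eq mult.commute)
    ultimately show "0 \<le> qform (qf N Z) u" by simp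
  qed
  moreover have "Z *v x = y"
    using c by (simp add: Z a c_def d_def)
  ultimately show ?thesis using that by blast
qed

context
  assumes robust: "\<forall>Z. psd (qf N Z) \<longrightarrow> pd (qf M Z)"
begin

lemma qform_M_pos:
  assumes "x \<noteq> 0" and "0 \<le> qform N (vjoin x y)"
  shows "0 < qform M (vjoin x y)"
proof -
  obtain Z where "Z *v x = y" and "psd (qf N Z)"
    using graph_through_point[OF assms] .
  then have "0 < qform (qf M Z) x" using robust assms(1) by (simp add: pd_def)
  then show ?thesis by (simp add: qf_qform \<open>Z *v x = y\<close>)
qed

lemma M_mv_kernel_N22:
  assumes "blk22 N *v v = 0"
  shows "M *v vjoin 0 v = 0"
proof -
  define q where "q = vjoin (0 :: real^'k) v"
  have Nq: "N *v q = 0" using N_mv_kernel_N22[OF assms] by (simp add: q_def)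
  \<comment> \<open>\<open>t \<mapsto> lift x + t q\<close> stays in the \<open>N\<close>-nonnegative cone, so \<open>M\<close> is positive along it.\<close>
  have along: "qform M q = 0 \<and> lift x \<bullet> (M *v q) = 0" if "x \<noteq> 0" for x
  proof -
    have "0 \<le> qform M (lift x) + 2*t*(lift x \<bullet> (M *v q)) + t^2 * qform M q" for t
    proof -
      have "lift x + t *\<^sub>R q = vjoin x (Z0 *v x + t *\<^sub>R v)"
        by (simp add: q_def flip: vjoin_0_scaleR vjoin_add)
      moreover have "qform N (lift x + t *\<^sub>R q) = qform N (lift x)"
        using qform_add_kernel[OF sym_N] Nq by (simp add: matrix_vector_mult_scaleR)
      ultimately have "0 < qform M (lift x + t *\<^sub>R q)"
        using qform_M_pos[OF that] qform_N_lift_nonneg[of x] by simp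
      then show ?thesis by (simp add: qform_add_scaleR[OF sym_M])
    qed
    then have "(lift x \<bullet> (M *v q))^2 \<le> qform M (lift x) * qform M q" and "0 \<le> qform M q"
      using quadratic_nonneg_imp_discriminant by blast+
    moreover have "qform M q \<le> 0"
      using qform_vjoin_0_nonpos[OF nsd_M22] by (simp add: q_def)
    ultimately show ?thesis by simp
  qed
  have "blk22 M *v v = 0"
    using along[of 1] by (intro blk22_kernel_of_qform_eq_0 sym_M nsd_M22) (simp add: q_def)
  then have bot: "vbot (M *v q) = 0" by (simp add: q_def vbot_mv_vjoin)
  have "vtop (M *v q) = 0"
  proof (rule ccontr)
    assume "vtop (M *v q) \<noteq> 0"
    then have "lift (vtop (M *v q)) \<bullet> (M *v q) = 0" using along by blast
    then show False
      using bot \<open>vtop (M *v q) \<noteq> 0\<close> by (simp add: inner_blocks[of "lift _"])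
  qed
  then show ?thesis using bot vjoin_vtop_vbot[of "M *v q"] by (simp add: q_def)
qed

definition null_directions :: "(real^('k + 'n)) set" where
  "null_directions = {w. vtop w = 0 \<and> blk22 N *v vbot w = 0}"

lemma subspace_null_directions: "subspace null_directions"
  by (simp add: subspace_def null_directions_def matrix_vector_right_distrib
      matrix_vector_mult_scaleR)

lemma null_directions_kernel:
  assumes "l \<in> null_directions"
  shows "M *v l = 0" and "N *v l = 0"
proof -
  have "l = vjoin 0 (vbot l)" and "blk22 N *v vbot l = 0"
    using assms vjoin_vtop_vbot[of l] by (auto simp: null_directions_def)
  then show "M *v l = 0" and "N *v l = 0"
    using M_mv_kernel_N22 N_mv_kernel_N22 by metis+
qed

lemma qform_M_pos_orthogonal_null_directions:
  assumes "0 \<le> qform N w" and "\<forall>l\<in>null_directions. l \<bullet> w = 0" and "w \<noteq> 0"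
  shows "0 < qform M w"
proof (cases "vtop w = 0")
  case False
  then show ?thesis
    using qform_M_pos[of "vtop w" "vbot w"] assms(1) by simp
next
  case True
  then have w: "w = vjoin 0 (vbot w)" using vjoin_vtop_vbot[of w] by simp
  then have "qform N (vjoin 0 (vbot w)) = 0"
    using assms(1) qform_vjoin_0_nonpos[OF nsd_N22, of "vbot w"] by simp
  then have "w \<in> null_directions"
    using True blk22_kernel_of_qform_eq_0[OF sym_N nsd_N22] by (simp add: null_directions_def)
  then have "w = 0" using assms(2) by auto
  then show ?thesis using assms(3) by simp
qed

lemma qform_M_coercive:
  obtains \<beta> where "0 < \<beta>" and "\<And>w. 0 \<le> qform N w \<Longrightarrow> \<beta> * (vtop w \<bullet> vtop w) \<le> qform M w"
proof -
  define C where "C = {w. 0 \<le> qform N w \<and> (\<forall>l\<in>null_directions. l \<bullet> w = 0)}"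
  have "closed C"
  proof -
    have "C = {w. 0 \<le> qform N w} \<inter> (\<Inter>l\<in>null_directions. {w. l \<bullet> w = 0})"
      by (auto simp: C_def)
    then show ?thesis
      by (auto intro!: closed_Int closed_INT closed_hyperplane closed_Collect_le continuous_intros)
  qed
  moreover have cone: "s *\<^sub>R w \<in> C" if "w \<in> C" "0 < s" for w s
    using that qform_scaleR[of s w N] by (auto simp: C_def)
  moreover have pos: "0 < qform M w" if "w \<in> C" "w \<noteq> 0" for w
    using that qform_M_pos_orthogonal_null_directions by (simp add: C_def)
  ultimately obtain \<beta> where "0 < \<beta>" and \<beta>: "\<And>w. w \<in> C \<Longrightarrow> \<beta> * (norm w)^2 \<le> qform M w"
    using qform_coercive_on_cone[of C M] by blast
  \<comment> \<open>Reduce to \<open>C\<close> by discarding the component of \<open>w\<close> in \<open>null_directions\<close>.\<close>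
  have "\<beta> * (vtop w \<bullet> vtop w) \<le> qform M w" if "0 \<le> qform N w" for w
  proof -
    obtain l w' where "l \<in> span null_directions" and w': "\<And>l. l \<in> span null_directions \<Longrightarrow> orthogonal w' l"
      and "w = w' + l"
      using orthogonal_subspace_decomp_exists[of null_directions w] by (metis add.commute)
    then have l: "l \<in> null_directions"
      by (simp only: span_eq_iff[THEN iffD2, OF subspace_null_directions])
    have M: "qform M w = qform M w'" and N: "qform N w = qform N w'"
      using \<open>w = w' + l\<close> null_directions_kernel[OF l] qform_add_kernel sym_M sym_N by auto
    have top: "vtop w = vtop w'" using \<open>w = w' + l\<close> l by (simp add: null_directions_def)
    have "w' \<in> C"
      using that N w' span_base by (auto simp: C_def orthogonal_def inner_commute)
    have "vtop w' \<bullet> vtop w' \<le> (norm w')^2"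
      by (simp add: power2_norm_eq_inner inner_blocks[of w' w'])
    then have "\<beta> * (vtop w' \<bullet> vtop w') \<le> \<beta> * (norm w')^2"
      using \<open>0 < \<beta>\<close> by simp
    then show ?thesis using \<beta>[OF \<open>w' \<in> C\<close>] M top by simp
  qed
  then show ?thesis using that \<open>0 < \<beta>\<close> by blast
qed

lemma exists_multipliers:
  obtains \<alpha> \<beta> where "0 \<le> \<alpha>" and "0 < \<beta>" and "psd (M - \<alpha> *\<^sub>R N - diagBeta \<beta>)"
proof -
  obtain \<beta> where "0 < \<beta>" and \<beta>: "\<And>w. 0 \<le> qform N w \<Longrightarrow> \<beta> * (vtop w \<bullet> vtop w) \<le> qform M w"
    using qform_M_coercive by blast
  define A where "A = M - diagBeta \<beta>"
  have sym_A: "transpose A = A" by (simp add: A_def transpose_diff transpose_diagBeta sym_M)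
  have A: "qform A w = qform M w - \<beta> * (vtop w \<bullet> vtop w)" for w
    by (simp add: A_def matrix_vector_mult_diff_rdistrib inner_diff_right qform_diagBeta)
  have "\<forall>w. 0 \<le> qform N w \<longrightarrow> 0 \<le> qform A w" using \<beta> A by simp
  then obtain \<alpha> where "0 \<le> \<alpha>" and \<alpha>: "\<And>w. \<alpha> * qform N w \<le> qform A w"
    using S_lemma[OF sym_A sym_N _ qform_N_lift_pos[of 1]] by auto
  have "psd (M - \<alpha> *\<^sub>R N - diagBeta \<beta>)"
    unfolding psd_def
  proof
    fix w
    have "qform (M - \<alpha> *\<^sub>R N - diagBeta \<beta>) w = qform A w - \<alpha> * qform N w"
      by (simp add: A_def matrix_vector_mult_diff_rdistrib inner_diff_right
          flip: scaleR_matrix_vector_assoc)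
    then show "0 \<le> qform (M - \<alpha> *\<^sub>R N - diagBeta \<beta>) w" using \<alpha>[of w] by simp
  qed
  then show ?thesis using that \<open>0 \<le> \<alpha>\<close> \<open>0 < \<beta>\<close> by blast
qed

end

end

lemma pd_qf_of_multipliers:
  fixes M N :: "real^('k::finite + 'n::finite)^('k + 'n)" and Z :: "real^'k^'n"
  assumes "0 \<le> \<alpha>" and "0 < \<beta>" and "psd (M - \<alpha> *\<^sub>R N - diagBeta \<beta>)" and "psd (qf N Z)"
  shows "pd (qf M Z)"
  unfolding pd_def
proof (intro allI impI)
  fix u :: "real^'k" assume "u \<noteq> 0"
  define w where "w = vjoin u (Z *v u)"
  have "0 \<le> qform (M - \<alpha> *\<^sub>R N - diagBeta \<beta>) w" using assms(3) by (simp add: psd_def)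
  also have "\<dots> = qform M w - \<alpha> * qform N w - \<beta> * (u \<bullet> u)"
    by (simp add: matrix_vector_mult_diff_rdistrib scaleR_matrix_vector_assoc[symmetric]
        inner_diff_right qform_diagBeta w_def)
  finally have "\<alpha> * qform N w + \<beta> * (u \<bullet> u) \<le> qform M w" by simp
  moreover have "0 \<le> \<alpha> * qform N w"
    using assms(1,4) by (simp add: psd_def qf_qform w_def)
  moreover have "0 < \<beta> * (u \<bullet> u)" using assms(2) \<open>u \<noteq> 0\<close> by simp
  ultimately show "0 < qform (qf M Z) u" by (simp add: qf_qform w_def)
qed

theorem theorem6:
  fixes M N :: "real^('k::finite + 'n::finite)^('k + 'n)"
  assumes "transpose M = M" and "transpose N = N"
    and "psd (- blk22 M)" and "psd (- blk22 N)"
    and "\<forall>v. blk22 N *v v = 0 \<longrightarrow> blk12 N *v v = 0"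
    and "\<exists>Zb :: real^'k^'n. pd (qf N Zb)"
  shows "(\<forall>Z \<in> {Z :: real^'k^'n. psd (qf N Z)}. pd (qf M Z)) \<longleftrightarrow>
         (\<exists>\<alpha> \<beta>. \<alpha> \<ge> 0 \<and> \<beta> > 0 \<and> psd (M - \<alpha> *\<^sub>R N - diagBeta \<beta>))"
proof
  obtain Zb :: "real^'k^'n" where "pd (qf N Zb)" using assms(6) ..
  then interpret matrix_S_lemma M N Zb using assms(1-5) by unfold_locales
  assume "\<forall>Z \<in> {Z. psd (qf N Z)}. pd (qf M Z)"
  then obtain \<alpha> \<beta> where "0 \<le> \<alpha>" "0 < \<beta>" "psd (M - \<alpha> *\<^sub>R N - diagBeta \<beta>)"
    using exists_multipliers by blast
  then show "\<exists>\<alpha> \<beta>. \<alpha> \<ge> 0 \<and> \<beta> > 0 \<and> psd (M - \<alpha> *\<^sub>R N - diagBeta \<beta>)" by blast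
qed (auto intro: pd_qf_of_multipliers)

end
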